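(* Let $\mathcal{G}=\{G_n\}$ be a graph sequence and $p$ a prime. Then $\beta_{\mathbb{Q}}(\mathcal{G})\le\beta_{\mathbb{F}_p}(\mathcal{G})\le c(\mathcal{G})-1$.
   Context: A graph sequence is a sequence $\mathcal{G}=\{G_n\}$ of finite simple graphs with uniformly bounded vertex degrees and $|V(G_n)|\to\infty$. For graph sequences with $V(H_n)=V(G_n)$, $\mathcal{H}\prec\mathcal{G}$ means there is an integer $L>0$ with $d_{G_n}(x,y)\le L\,d_{H_n}(x,y)$ for all $n,x,y$ (shortest path metrics), and $\mathcal{G}\simeq\mathcal{H}$ means $\mathcal{H}\prec\mathcal{G}$ and $\mathcal{G}\prec\mathcal{H}$. $e(\mathcal{G})=\liminf_n |E(G_n)|/|V(G_n)|$, $c(\mathcal{G})=\inf_{\mathcal{H}\simeq\mathcal{G}}e(\mathcal{H})$. For a field $K$ and finite graph $G$, $\varepsilon_K(G)$ is the $K$-vector space spanned by oriented edges with $(x,y)=-(y,x)$; a cycle $(x_1,\dots,x_m,x_1)$ gives the vector $\sum_{i=1}^{m-1}(x_i,x_{i+1})+(x_m,x_1)$; $C^q_K(G)$ is the subspace spanned by vectors of cycles of length at most $q$. $s^q_K(\mathcal{G})=\liminf_n \frac{|E(G_n)|-\dim_K C^q_K(G_n)}{|V(G_n)|}-1$, $\beta_K(\mathcal{G})=\inf_q s^q_K(\mathcal{G})$. $\mathbb{F}_p$ is the field with $p$ elements. *)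

theory Defs
  imports "HOL-Analysis.Analysis" "HOL-Library.Extended_Nat" "HOL-Library.Function_Algebras" "HOL-Computational_Algebra.Primes"
begin

record 'a graph =
  verts :: "'a set"
  edges :: "'a set set"

definition simple_graph :: "'a graph \<Rightarrow> bool" where
  "simple_graph G \<longleftrightarrow> finite (verts G) \<and> (\<forall>e\<in>edges G. e \<subseteq> verts G \<and> card e = 2)"

definition degree :: "'a graph \<Rightarrow> 'a \<Rightarrow> nat" where
  "degree G v = card {e \<in> edges G. v \<in> e}"

definition graph_seq :: "(nat \<Rightarrow> 'a graph) \<Rightarrow> bool" where
  "graph_seq G \<longleftrightarrow> (\<forall>n. simple_graph (G n))
     \<and> (\<exists>D. \<forall>n. \<forall>v\<in>verts (G n). degree (G n) v \<le> D)
     \<and> filterlim (\<lambda>n. card (verts (G n))) at_top sequentially"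

definition adjrel :: "'a graph \<Rightarrow> ('a \<times> 'a) set" where
  "adjrel G = {(x, y). {x, y} \<in> edges G}"

text \<open>Shortest path metric (infinite if no path).\<close>
definition gdist :: "'a graph \<Rightarrow> 'a \<Rightarrow> 'a \<Rightarrow> enat" where
  "gdist G x y = (INF k \<in> {k. (x, y) \<in> adjrel G ^^ k}. enat k)"

definition prec :: "(nat \<Rightarrow> 'a graph) \<Rightarrow> (nat \<Rightarrow> 'a graph) \<Rightarrow> bool" where
  "prec H G \<longleftrightarrow> (\<forall>n. verts (H n) = verts (G n)) \<and>
     (\<exists>L::nat. L > 0 \<and> (\<forall>n x y. gdist (G n) x y \<le> enat L * gdist (H n) x y))"

definition qi_equiv :: "(nat \<Rightarrow> 'a graph) \<Rightarrow> (nat \<Rightarrow> 'a graph) \<Rightarrow> bool" where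
  "qi_equiv G H \<longleftrightarrow> prec H G \<and> prec G H"

definition e_const :: "(nat \<Rightarrow> 'a graph) \<Rightarrow> ereal" where
  "e_const G = Liminf sequentially
     (\<lambda>n. ereal (real (card (edges (G n))) / real (card (verts (G n)))))"

definition c_const :: "(nat \<Rightarrow> 'a graph) \<Rightarrow> ereal" where
  "c_const G = (INF H \<in> {H. graph_seq H \<and> qi_equiv G H}. e_const H)"

text \<open>The space \<open>\<epsilon>_K(G)\<close> is realised inside the functions \<open>'a \<times> 'a \<Rightarrow> K\<close>:
  the oriented edge (x,y) is the function taking 1 at (x,y) and -1 at (y,x),
  so that (x,y) = -(y,x) and distinct edges are linearly independent.\<close>
definition oedge :: "'a \<Rightarrow> 'a \<Rightarrow> ('a \<times> 'a \<Rightarrow> 'k::field)" where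
  "oedge x y = (\<lambda>(u, v). if (u, v) = (x, y) then 1 else if (u, v) = (y, x) then -1 else 0)"

text \<open>Cycle (x_1,...,x_m,x_1): distinct vertices, m \<ge> 3, consecutive ones adjacent; its length is m.\<close>
definition is_cycle :: "'a graph \<Rightarrow> 'a list \<Rightarrow> bool" where
  "is_cycle G xs \<longleftrightarrow> length xs \<ge> 3 \<and> distinct xs \<and>
     (\<forall>i < length xs. {xs ! i, xs ! ((i + 1) mod length xs)} \<in> edges G)"

definition cyc_vec :: "'a list \<Rightarrow> ('a \<times> 'a \<Rightarrow> 'k::field)" where
  "cyc_vec xs = (\<lambda>z. \<Sum>i < length xs. oedge (xs ! i) (xs ! ((i + 1) mod length xs)) z)"

definition cyc_dim :: "'k::field itself \<Rightarrow> 'a graph \<Rightarrow> nat \<Rightarrow> nat" where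
  "cyc_dim K G q = vector_space.dim (\<lambda>(c::'k) f z. c * f z)
     {(cyc_vec xs :: 'a \<times> 'a \<Rightarrow> 'k) | xs. is_cycle G xs \<and> length xs \<le> q}"

definition s_const :: "'k::field itself \<Rightarrow> nat \<Rightarrow> (nat \<Rightarrow> 'a graph) \<Rightarrow> ereal" where
  "s_const K q G = Liminf sequentially
     (\<lambda>n. ereal ((real (card (edges (G n))) - real (cyc_dim K (G n) q)) / real (card (verts (G n))))) - 1"

definition beta :: "'k::field itself \<Rightarrow> (nat \<Rightarrow> 'a graph) \<Rightarrow> ereal" where
  "beta K G = (INF q. s_const K q G)"

end

theory Submission
  imports Defs
begin

text \<open>
Cycle vectors have integer coordinates. A rational linear relation among integer vectors can be
scaled to an integer relation whose coefficients are coprime, and such a relation stays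
nontrivial over every field K. So integer vectors that are independent over K are independent
over Q, whence dim C^q_K(G) <= dim C^q_Q(G) for every q and beta_Q <= beta_K.

For the second inequality let H be quasi-isometric to G with constants L1, L2. Fix for every edge
of H a G-walk of length at most L1 between its ends, and let T be the set of their vectors, so
card T <= |E(H)|. Each edge xy of G is joined by an H-walk of length at most L2; replacing its
edges by the fixed G-walks gives a G-walk W from x to y of length at most L1 L2 whose vector lies
in span T. Closing W with the edge yx gives a closed walk of length at most L1 L2 + 1, and closed
walks split into cycles, so its vector lies in C^(L1 L2 + 1)_K(G). Hence the |E(G)| independent
edge vectors of G lie in C^(L1 L2 + 1)_K(G) + span T, that is
|E(G)| - dim C^(L1 L2 + 1)_K(G) <= |E(H)|. Dividing by |V(G_n)| = |V(H_n)| and passing to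
liminf and infimum gives beta_K <= c - 1.
\<close>

section \<open>Dimension bounds in spaces of functions\<close>

lemma (in vector_space) card_independent_le_dim_add_card:
  assumes "finite C" "finite T" "independent S" "S \<subseteq> span (C \<union> T)"
  shows "card S \<le> dim C + card T"
proof -
  obtain B where B: "B \<subseteq> C" "C \<subseteq> span B" "card B = dim C"
    by (meson basis_exists)
  have "C \<union> T \<subseteq> span (B \<union> T)"
    using B(2) span_mono[of B "B \<union> T"] span_superset[of "B \<union> T"] by blast
  then have "S \<subseteq> span (B \<union> T)"
    using assms(4) span_minimal[OF _ subspace_span] by blast
  moreover have "finite (B \<union> T)"
    using B(1) assms(1,2) finite_subset by blast
  ultimately have "card S \<le> card (B \<union> T)"
    using assms(3) independent_span_bound by blast
  also have "\<dots> \<le> dim C + card T"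
    using card_Un_le[of B T] B(3) by simp
  finally show ?thesis .
qed

lemma (in vector_space) card_independent_le_dim:
  assumes "finite V" "independent S" "S \<subseteq> span V"
  shows "card S \<le> dim V"
  using card_independent_le_dim_add_card[of V "{}" S] assms by simp

interpretation fun_space: vector_space "\<lambda>(c::'k::field) (f::'b \<Rightarrow> 'k) z. c * f z"
  by unfold_locales (auto simp: fun_eq_iff algebra_simps)

lemma sum_fun_apply: "(\<Sum>w\<in>A. f w) z = (\<Sum>w\<in>A. f w z)"
  by (induction A rule: infinite_finite_induct) auto

section \<open>Edge vectors and walks\<close>

lemma simple_graph_edge_neq: "simple_graph G \<Longrightarrow> {x, y} \<in> edges G \<Longrightarrow> x \<noteq> y"
  by (fastforce simp: simple_graph_def)

lemma finite_edges: "simple_graph G \<Longrightarrow> finite (edges G)"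
  unfolding simple_graph_def by (meson Pow_iff finite_Pow_iff finite_subset subsetI)

lemma oedge_swap: "x \<noteq> y \<Longrightarrow> oedge y x = (- oedge x y :: _ \<Rightarrow> 'k::field)"
  by (auto simp: oedge_def fun_eq_iff)

definition orient :: "'a set \<Rightarrow> 'a \<times> 'a" where
  "orient e = (SOME (x, y). e = {x, y})"

definition edge_vec :: "'a set \<Rightarrow> 'a \<times> 'a \<Rightarrow> 'k::field" where
  "edge_vec e = oedge (fst (orient e)) (snd (orient e))"

lemma orient_edge:
  assumes "simple_graph G" "e \<in> edges G"
  shows "e = {fst (orient e), snd (orient e)}"
proof -
  obtain x y where "e = {x, y}"
    using assms by (auto simp: simple_graph_def card_2_iff)
  then have "(\<lambda>(x, y). e = {x, y}) (orient e)"
    unfolding orient_def using someI[of "\<lambda>(x, y). e = {x, y}" "(x, y)"] by simp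
  then show ?thesis
    by (simp add: case_prod_beta)
qed

lemma edge_vec_at_orient:
  assumes "simple_graph G" "e \<in> edges G" "e' \<in> edges G"
  shows "edge_vec e (orient e') = (if e = e' then 1 else 0)"
proof -
  obtain a b c d where ab: "orient e = (a, b)" and cd: "orient e' = (c, d)"
    by (cases "orient e", cases "orient e'")
  have e: "e = {a, b}" and e': "e' = {c, d}"
    using orient_edge[OF assms(1,2)] orient_edge[OF assms(1,3)] ab cd by simp_all
  show ?thesis
  proof (cases "e = e'")
    case True
    then show ?thesis
      using ab cd by (simp add: edge_vec_def oedge_def)
  next
    case False
    then have "(c, d) \<noteq> (a, b)" "(c, d) \<noteq> (b, a)"
      using e e' by (auto simp: doubleton_eq_iff)
    then show ?thesis
      using False ab cd by (simp add: edge_vec_def oedge_def)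
  qed
qed

lemma edge_vec_inj_on:
  assumes "simple_graph G"
  shows "inj_on (edge_vec :: _ \<Rightarrow> _ \<Rightarrow> 'k::field) (edges G)"
proof (rule inj_onI)
  fix e e'
  assume e: "e \<in> edges G" "e' \<in> edges G" and eq: "(edge_vec e :: _ \<Rightarrow> 'k) = edge_vec e'"
  have "(edge_vec e' (orient e) :: 'k) = 1"
    unfolding eq[symmetric] by (simp add: edge_vec_at_orient[OF assms e(1) e(1)])
  then show "e = e'"
    by (simp add: edge_vec_at_orient[OF assms e(2) e(1)] split: if_splits)
qed

lemma independent_edge_vecs:
  assumes "simple_graph G"
  shows "fun_space.independent (edge_vec ` edges G :: ('a \<times> 'a \<Rightarrow> 'k::field) set)"
  unfolding fun_space.independent_explicit_finite_subsets
proof (intro allI impI ballI)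
  fix S u v
  assume S: "S \<subseteq> edge_vec ` edges G" "finite S"
    and sum: "(\<Sum>w\<in>S. (\<lambda>z. u w * w z)) = (0 :: _ \<Rightarrow> 'k)" and "v \<in> S"
  then obtain e where e: "e \<in> edges G" "v = edge_vec e"
    by blast
  have at_e: "w (orient e) = (if w = v then 1 else 0)" if w: "w \<in> S" for w
  proof -
    obtain e' where e': "e' \<in> edges G" "w = edge_vec e'"
      using S(1) w by blast
    then have "w = v \<longleftrightarrow> e' = e"
      using e inj_on_eq_iff[OF edge_vec_inj_on[OF assms]] by blast
    then show ?thesis
      using e' by (simp add: edge_vec_at_orient[OF assms e'(1) e(1)])
  qed
  have "0 = (\<Sum>w\<in>S. (\<lambda>z. u w * w z)) (orient e)"
    by (simp add: sum)
  also have "\<dots> = (\<Sum>w\<in>S. if w = v then u w else 0)"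
    unfolding sum_fun_apply by (rule sum.cong) (simp_all add: at_e)
  also have "\<dots> = u v"
    using S(2) \<open>v \<in> S\<close> by simp
  finally show "u v = 0"
    by simp
qed

fun walk :: "'a graph \<Rightarrow> 'a list \<Rightarrow> bool" where
  "walk G (x # y # r) \<longleftrightarrow> {x, y} \<in> edges G \<and> walk G (y # r)"
| "walk G _ \<longleftrightarrow> True"

fun walk_vec :: "'a list \<Rightarrow> 'a \<times> 'a \<Rightarrow> 'k::field" where
  "walk_vec (x # y # r) = oedge x y + walk_vec (y # r)"
| "walk_vec _ = 0"

lemma walk_append: "walk G (xs @ y # ys) \<longleftrightarrow> walk G (xs @ [y]) \<and> walk G (y # ys)"
proof (induction xs)
  case (Cons a xs)
  then show ?case by (cases xs) auto
qed simp

lemma walk_vec_append: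
  "walk_vec (xs @ y # ys) = (walk_vec (xs @ [y]) + walk_vec (y # ys) :: _ \<Rightarrow> 'k::field)"
proof (induction xs)
  case (Cons a xs)
  then show ?case by (cases xs) (auto simp: add.assoc)
qed simp

lemma walk_rev: "walk G (rev ps) \<longleftrightarrow> walk G ps"
proof (induction ps rule: walk.induct)
  case (1 G x y r)
  then show ?case
    using walk_append[of G "rev r" y "[x]"] by (auto simp: insert_commute)
qed auto

lemma walk_vec_rev:
  assumes "simple_graph G"
  shows "walk G ps \<Longrightarrow> walk_vec (rev ps) = (- walk_vec ps :: _ \<Rightarrow> 'k::field)"
proof (induction ps rule: walk_vec.induct)
  case (1 x y r)
  then have "x \<noteq> y"
    using simple_graph_edge_neq[OF assms] by simp
  have "walk_vec (rev (x # y # r)) = walk_vec (rev r @ [y]) + (walk_vec [y, x] :: _ \<Rightarrow> 'k)"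
    using walk_vec_append[of "rev r" y "[x]"] by simp
  also have "\<dots> = - (oedge x y + walk_vec (y # r))"
    using 1 oedge_swap[OF \<open>x \<noteq> y\<close>] by (simp add: fun_eq_iff)
  finally show ?case
    by simp
qed auto

lemma walk_iff_nth:
  "walk G ps \<longleftrightarrow> (\<forall>i. Suc i < length ps \<longrightarrow> {ps ! i, ps ! Suc i} \<in> edges G)"
proof (induction ps rule: walk.induct)
  case (1 G x y r)
  show ?case
    unfolding walk.simps 1 by (auto simp: less_Suc_eq_0_disj)
qed auto

lemma walk_vec_eq_sum:
  "walk_vec ps = (\<lambda>z. \<Sum>i < length ps - 1. (oedge (ps ! i) (ps ! Suc i) z :: 'k::field))"
proof (induction ps rule: walk_vec.induct)
  case (1 x y r)
  then show ?case by (simp add: fun_eq_iff sum.lessThan_Suc_shift del: sum.lessThan_Suc)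
qed (simp_all add: fun_eq_iff)

definition walk_betw :: "'a graph \<Rightarrow> 'a \<Rightarrow> 'a list \<Rightarrow> 'a \<Rightarrow> bool" where
  "walk_betw G x ps y \<longleftrightarrow> walk G ps \<and> ps \<noteq> [] \<and> hd ps = x \<and> last ps = y"

lemma walk_betw_join:
  assumes "walk_betw G x P y" "walk_betw G y Q z"
  shows "walk_betw G x (butlast P @ Q) z"
    and "walk_vec (butlast P @ Q) = (walk_vec P + walk_vec Q :: _ \<Rightarrow> 'k::field)"
    and "length (butlast P @ Q) = length P + length Q - 1"
proof -
  obtain Q' where Q: "Q = y # Q'"
    using assms(2) by (cases Q) (auto simp: walk_betw_def)
  obtain P' where P: "P = P' @ [y]"
    using assms(1) by (metis append_butlast_last_id walk_betw_def)
  have "hd (P' @ Q) = x"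
    using assms P Q by (cases P') (auto simp: walk_betw_def)
  then show "walk_betw G x (butlast P @ Q) z"
    using assms walk_append[of G P' y Q'] P Q by (auto simp: walk_betw_def)
  show "walk_vec (butlast P @ Q) = (walk_vec P + walk_vec Q :: _ \<Rightarrow> 'k)"
    using walk_vec_append[of P' y Q'] P Q by simp
  show "length (butlast P @ Q) = length P + length Q - 1"
    using P by simp
qed

lemma walk_betw_rev: "walk_betw G x P y \<Longrightarrow> walk_betw G y (rev P) x"
  by (auto simp: walk_betw_def walk_rev hd_rev last_rev)

lemma walk_betw_either_direction:
  assumes "simple_graph G" "walk_betw G x' P y'" "{x, y} = {x', y'}"
    and "(walk_vec P :: _ \<Rightarrow> 'k::field) \<in> fun_space.span T"
  shows "\<exists>P'. walk_betw G x P' y \<and> length P' = length P \<and> walk_vec P' \<in> fun_space.span T"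
proof -
  from assms(3) have "x' = x \<and> y' = y \<or> x' = y \<and> y' = x"
    by (auto simp: doubleton_eq_iff)
  then show ?thesis
  proof
    assume "x' = x \<and> y' = y"
    then show ?thesis
      using assms(2,4) by blast
  next
    assume "x' = y \<and> y' = x"
    then have "walk_betw G x (rev P) y"
      using walk_betw_rev[OF assms(2)] by simp
    moreover have "walk_vec (rev P) = (- walk_vec P :: _ \<Rightarrow> 'k)"
      using assms(2) unfolding walk_betw_def by (intro walk_vec_rev[OF assms(1)]) simp
    ultimately show ?thesis
      using fun_space.span_neg[OF assms(4)] by (intro exI[of _ "rev P"]) simp
  qed
qed

lemma walk_splice:
  "walk G (xs @ v # ys @ v # zs) \<Longrightarrow> walk G (v # ys @ [v]) \<and> walk G (xs @ v # zs)"
  using walk_append[of G xs v "ys @ v # zs"] walk_append[of G "v # ys" v zs]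
    walk_append[of G xs v zs] by auto

lemma walk_vec_splice:
  "walk_vec (xs @ v # ys @ v # zs)
    = (walk_vec (v # ys @ [v]) + walk_vec (xs @ v # zs) :: _ \<Rightarrow> 'k::field)"
  unfolding walk_vec_append[of xs v "ys @ v # zs"] walk_vec_append[of "v # ys" v zs, simplified]
    walk_vec_append[of xs v zs]
  by (simp add: ac_simps)

section \<open>Closed walks and short cycles\<close>

definition short_cycle_vecs :: "'a graph \<Rightarrow> nat \<Rightarrow> ('a \<times> 'a \<Rightarrow> 'k::field) set" where
  "short_cycle_vecs G q = {cyc_vec xs | xs. is_cycle G xs \<and> length xs \<le> q}"

lemma finite_short_cycles:
  assumes "simple_graph G"
  shows "finite {xs. is_cycle G xs \<and> length xs \<le> q}"
proof -
  have "set xs \<subseteq> verts G" if "is_cycle G xs" for xs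
  proof
    fix v
    assume "v \<in> set xs"
    then obtain i where "i < length xs" "v = xs ! i"
      by (auto simp: in_set_conv_nth)
    with that have "{v, xs ! ((i + 1) mod length xs)} \<in> edges G"
      by (auto simp: is_cycle_def)
    then show "v \<in> verts G"
      using assms by (auto simp: simple_graph_def)
  qed
  then have "{xs. is_cycle G xs \<and> length xs \<le> q} \<subseteq> {xs. set xs \<subseteq> verts G \<and> length xs \<le> q}"
    by blast
  moreover have "finite (verts G)"
    using assms by (simp add: simple_graph_def)
  ultimately show ?thesis
    using finite_lists_length_le finite_subset by blast
qed

lemma finite_short_cycle_vecs:
  assumes "simple_graph G"
  shows "finite (short_cycle_vecs G q :: ('a \<times> 'a \<Rightarrow> 'k::field) set)"
proof -
  have "(short_cycle_vecs G q :: (_ \<Rightarrow> 'k) set) = cyc_vec ` {xs. is_cycle G xs \<and> length xs \<le> q}"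
    unfolding short_cycle_vecs_def by blast
  then show ?thesis
    using finite_short_cycles[OF assms] by simp
qed

lemma cycle_if_closed_walk:
  assumes "walk G (xs @ [xs ! 0])" "distinct xs" "length xs \<ge> 3"
  shows "is_cycle G xs" "walk_vec (xs @ [xs ! 0]) = (cyc_vec xs :: _ \<Rightarrow> 'k::field)"
proof -
  have nth: "(xs @ [xs ! 0]) ! i = xs ! i" "(xs @ [xs ! 0]) ! Suc i = xs ! ((i + 1) mod length xs)"
    if "i < length xs" for i
  proof -
    have "Suc i < length xs \<or> Suc i = length xs"
      using that by linarith
    then show "(xs @ [xs ! 0]) ! i = xs ! i" "(xs @ [xs ! 0]) ! Suc i = xs ! ((i + 1) mod length xs)"
      using that by (auto simp: nth_append)
  qed
  show "is_cycle G xs"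
    using assms nth by (auto simp: is_cycle_def walk_iff_nth)
  show "walk_vec (xs @ [xs ! 0]) = (cyc_vec xs :: _ \<Rightarrow> 'k)"
    unfolding walk_vec_eq_sum cyc_vec_def by (simp add: nth)
qed

lemma walk_vec_short_closed_walk:
  assumes "simple_graph G" "walk_betw G x ps x" "length ps \<le> 3"
  shows "walk_vec ps = 0"
proof (cases "length ps \<le> 1")
  case True
  then show ?thesis
    by (cases ps rule: walk_vec.cases) auto
next
  case False
  then obtain y r where ps: "ps = x # y # r" "length r \<le> 1"
    using assms(2,3) by (cases ps rule: walk_vec.cases) (auto simp: walk_betw_def)
  have "x \<noteq> y"
    using assms(2) ps simple_graph_edge_neq[OF assms(1)] by (auto simp: walk_betw_def)
  then have "r = [x]"
    using assms(2) ps by (cases r) (auto simp: walk_betw_def)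
  then show ?thesis
    using ps by (simp add: oedge_swap[OF \<open>x \<noteq> y\<close>])
qed

lemma simple_closed_walk_vec_in_span_short_cycles:
  assumes "simple_graph G" "walk_betw G x ps x" "distinct (butlast ps)" "length ps \<le> q + 1"
  shows "(walk_vec ps :: _ \<Rightarrow> 'k::field) \<in> fun_space.span (short_cycle_vecs G q)"
proof (cases "length ps \<le> 3")
  case True
  then have "walk_vec ps = (0 :: _ \<Rightarrow> 'k)"
    by (rule walk_vec_short_closed_walk[OF assms(1,2)])
  then show ?thesis
    by (simp add: fun_space.span_zero)
next
  case False
  obtain xs where ps: "ps = xs @ [x]"
    using assms(2) by (metis append_butlast_last_id walk_betw_def)
  have "xs \<noteq> []"
    using False ps by auto
  then have "hd xs = x"
    using assms(2) ps by (simp add: walk_betw_def)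
  then have "ps = xs @ [xs ! 0]"
    using ps \<open>xs \<noteq> []\<close> by (simp add: hd_conv_nth)
  moreover have "walk G ps"
    using assms(2) by (simp add: walk_betw_def)
  ultimately have "is_cycle G xs" "walk_vec ps = (cyc_vec xs :: _ \<Rightarrow> 'k)"
    using cycle_if_closed_walk[of G xs] assms(3) False ps by auto
  moreover have "length xs \<le> q"
    using assms(4) ps by simp
  ultimately show ?thesis
    by (auto simp: short_cycle_vecs_def intro: fun_space.span_base)
qed

lemma closed_walk_vec_in_span_short_cycles:
  assumes "simple_graph G"
  shows "walk_betw G x ps x \<Longrightarrow> length ps \<le> q + 1 \<Longrightarrow>
    (walk_vec ps :: _ \<Rightarrow> 'k::field) \<in> fun_space.span (short_cycle_vecs G q)"
proof (induction "length ps" arbitrary: ps x rule: less_induct)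
  case less
  show ?case
  proof (cases "distinct (butlast ps)")
    case True
    then show ?thesis
      by (rule simple_closed_walk_vec_in_span_short_cycles[OF assms less.prems(1) _ less.prems(2)])
  next
    case False
    then obtain a v b c where "butlast ps = a @ [v] @ b @ [v] @ c"
      using not_distinct_decomp by blast
    then have ps: "ps = a @ v # b @ v # (c @ [x])"
      using less.prems(1) append_butlast_last_id[of ps] by (auto simp: walk_betw_def)
    have walks: "walk G (v # b @ [v])" "walk G (a @ v # c @ [x])"
      using walk_splice[of G a v b "c @ [x]"] less.prems(1) ps by (auto simp: walk_betw_def)
    have inner: "walk_betw G v (v # b @ [v]) v"
      using walks(1) by (simp add: walk_betw_def)
    have outer: "walk_betw G x (a @ v # c @ [x]) x"
      using walks(2) less.prems(1) ps by (cases a) (auto simp: walk_betw_def)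
    have shorter: "length (v # b @ [v]) < length ps" "length (a @ v # c @ [x]) < length ps"
      using ps by auto
    have "(walk_vec (v # b @ [v]) :: _ \<Rightarrow> 'k) \<in> fun_space.span (short_cycle_vecs G q)"
      using less.hyps[OF shorter(1) inner] shorter(1) less.prems(2) by simp
    moreover have "(walk_vec (a @ v # c @ [x]) :: _ \<Rightarrow> 'k) \<in> fun_space.span (short_cycle_vecs G q)"
      using less.hyps[OF shorter(2) outer] shorter(2) less.prems(2) by simp
    ultimately show ?thesis
      unfolding ps walk_vec_splice by (rule fun_space.span_add)
  qed
qed

section \<open>Quasi-isometric graphs\<close>

lemma walk_if_relpow:
  "(x, y) \<in> adjrel G ^^ k \<Longrightarrow> \<exists>ps. walk_betw G x ps y \<and> length ps = k + 1"
proof (induction k arbitrary: x)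
  case 0
  then show ?case
    by (intro exI[of _ "[x]"]) (simp add: walk_betw_def)
next
  case (Suc k)
  obtain z where "(x, z) \<in> adjrel G" "(z, y) \<in> adjrel G ^^ k"
    using relpow_Suc_D2[OF Suc.prems] by blast
  moreover obtain ps where ps: "walk_betw G z ps y" "length ps = k + 1"
    using Suc.IH[OF calculation(2)] by blast
  moreover obtain ps' where "ps = z # ps'"
    using ps(1) unfolding walk_betw_def by (metis list.collapse)
  ultimately have "walk_betw G x (x # ps) y" "length (x # ps) = Suc k + 1"
    by (auto simp: walk_betw_def adjrel_def)
  then show ?case
    by blast
qed

lemma walk_if_gdist_le:
  assumes "gdist G x y \<le> enat m"
  shows "\<exists>ps. walk_betw G x ps y \<and> length ps \<le> m + 1"
proof -
  have "gdist G x y < enat (Suc m)"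
    using assms by (rule order_le_less_trans) simp
  then obtain k where "(x, y) \<in> adjrel G ^^ k" "enat k < enat (Suc m)"
    unfolding gdist_def INF_less_iff by blast
  moreover obtain ps where "walk_betw G x ps y" "length ps = k + 1"
    using walk_if_relpow[OF calculation(1)] by blast
  ultimately show ?thesis
    by (intro exI[of _ ps]) simp
qed

lemma gdist_le_one_if_edge: "{x, y} \<in> edges G \<Longrightarrow> gdist G x y \<le> 1"
  unfolding gdist_def one_enat_def by (rule INF_lower2[of 1]) (auto simp: adjrel_def)

lemma walk_if_edge_stretch:
  assumes "\<And>x y. gdist G x y \<le> enat L * gdist H x y" "{x, y} \<in> edges H"
  shows "\<exists>ps. walk_betw G x ps y \<and> length ps \<le> L + 1"
proof -
  have "enat L * gdist H x y \<le> enat L * 1"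
    by (rule mult_left_mono[OF gdist_le_one_if_edge[OF assms(2)]]) simp
  then have "gdist G x y \<le> enat L * 1"
    using assms(1)[of x y] by (rule order_trans[rotated])
  then show ?thesis
    by (intro walk_if_gdist_le) simp
qed

lemma lift_walk:
  fixes T :: "('a \<times> 'a \<Rightarrow> 'k::field) set"
  assumes edge_walks: "\<And>x y. {x, y} \<in> edges H \<Longrightarrow>
      \<exists>P. walk_betw G x P y \<and> length P \<le> L + 1 \<and> walk_vec P \<in> fun_space.span T"
  shows "walk_betw H x ps y \<Longrightarrow>
      \<exists>W. walk_betw G x W y \<and> length W \<le> L * (length ps - 1) + 1 \<and> walk_vec W \<in> fun_space.span T"
proof (induction ps arbitrary: x)
  case Nil
  then show ?case
    by (simp add: walk_betw_def)
next
  case (Cons x' r)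
  show ?case
  proof (cases r)
    case Nil
    then have "walk_betw G x [x] y" "length [x] \<le> L * (length (x' # r) - 1) + 1"
      using Cons.prems by (auto simp: walk_betw_def)
    moreover have "(walk_vec [x] :: _ \<Rightarrow> 'k) \<in> fun_space.span T"
      by (simp only: walk_vec.simps fun_space.span_zero)
    ultimately show ?thesis
      by blast
  next
    case (Cons z r')
    then have "{x, z} \<in> edges H" "walk_betw H z r y"
      using Cons.prems by (auto simp: walk_betw_def)
    obtain P where P: "walk_betw G x P z" "length P \<le> L + 1" "walk_vec P \<in> fun_space.span T"
      using edge_walks[OF \<open>{x, z} \<in> edges H\<close>] by blast
    obtain W where W: "walk_betw G z W y" "length W \<le> L * (length r - 1) + 1"
      "walk_vec W \<in> fun_space.span T"
      using Cons.IH[OF \<open>walk_betw H z r y\<close>] by blast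
    have "length (butlast P @ W) \<le> L * (length (x' # r) - 1) + 1"
      using P(2) W(2) Cons walk_betw_join(3)[OF P(1) W(1)] by (simp add: algebra_simps)
    moreover have "walk_vec (butlast P @ W) \<in> fun_space.span T"
      unfolding walk_betw_join(2)[OF P(1) W(1)] by (rule fun_space.span_add[OF P(3) W(3)])
    ultimately show ?thesis
      using walk_betw_join(1)[OF P(1) W(1)] by blast
  qed
qed

lemma edge_walk_vecs_exist:
  assumes "simple_graph G" "simple_graph H"
    and stretch: "\<And>x y. gdist G x y \<le> enat L * gdist H x y"
  obtains T :: "('a \<times> 'a \<Rightarrow> 'k::field) set" where "finite T" "card T \<le> card (edges H)"
    "\<And>x y. {x, y} \<in> edges H \<Longrightarrow>
      \<exists>P. walk_betw G x P y \<and> length P \<le> L + 1 \<and> walk_vec P \<in> fun_space.span T"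
proof -
  define edge_walk where
    "edge_walk e = (SOME P. \<exists>x y. e = {x, y} \<and> walk_betw G x P y \<and> length P \<le> L + 1)" for e
  define T where "T = (\<lambda>e. walk_vec (edge_walk e) :: _ \<Rightarrow> 'k) ` edges H"
  have edge_walks: "\<exists>P. walk_betw G x P y \<and> length P \<le> L + 1 \<and> walk_vec P \<in> fun_space.span T"
    if edge: "{x, y} \<in> edges H" for x y
  proof -
    let ?P = "edge_walk {x, y}"
    obtain P0 where "walk_betw G x P0 y" "length P0 \<le> L + 1"
      using walk_if_edge_stretch[OF stretch edge] by blast
    then have "\<exists>x' y'. {x, y} = {x', y'} \<and> walk_betw G x' P0 y' \<and> length P0 \<le> L + 1"
      by (intro exI[of _ x] exI[of _ y]) simp
    then have "\<exists>x' y'. {x, y} = {x', y'} \<and> walk_betw G x' ?P y' \<and> length ?P \<le> L + 1"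
      unfolding edge_walk_def by (rule someI)
    then obtain x' y' where P: "{x, y} = {x', y'}" "walk_betw G x' ?P y'" "length ?P \<le> L + 1"
      by (elim exE conjE)
    have "walk_vec ?P \<in> fun_space.span T"
      using edge by (auto simp: T_def intro: fun_space.span_base)
    then show ?thesis
      using walk_betw_either_direction[OF assms(1) P(2,1)] P(3) by fastforce
  qed
  have "finite T" "card T \<le> card (edges H)"
    using finite_edges[OF assms(2)] by (auto simp: T_def card_image_le)
  then show ?thesis
    using edge_walks by (rule that)
qed

lemma oedge_in_span_short_cycles_Un:
  fixes T :: "('a \<times> 'a \<Rightarrow> 'k::field) set"
  assumes "simple_graph G"
    and edge_walks: "\<And>x y. {x, y} \<in> edges H \<Longrightarrow>
      \<exists>P. walk_betw G x P y \<and> length P \<le> L1 + 1 \<and> walk_vec P \<in> fun_space.span T"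
    and stretch: "\<And>x y. gdist H x y \<le> enat L2 * gdist G x y"
    and edge: "{x, y} \<in> edges G"
  shows "oedge x y \<in> fun_space.span (short_cycle_vecs G (L1 * L2 + 1) \<union> T)"
proof -
  obtain ps where ps: "walk_betw H x ps y" "length ps \<le> L2 + 1"
    using walk_if_edge_stretch[OF stretch edge] by blast
  obtain W where W: "walk_betw G x W y" "length W \<le> L1 * (length ps - 1) + 1"
    "walk_vec W \<in> fun_space.span T"
    using lift_walk[OF edge_walks ps(1)] by blast
  have return: "walk_betw G y [y, x] x"
    using edge by (simp add: walk_betw_def insert_commute)
  note closed = walk_betw_join[OF W(1) return]
  have "L1 * (length ps - 1) \<le> L1 * L2"
    using ps(2) by (intro mult_le_mono2) simp
  moreover have "length (butlast W @ [y, x]) = length W + 1"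
    using closed(3) by simp
  ultimately have "length (butlast W @ [y, x]) \<le> (L1 * L2 + 1) + 1"
    using W(2) by linarith
  then have "walk_vec (butlast W @ [y, x]) \<in> fun_space.span (short_cycle_vecs G (L1 * L2 + 1))"
    by (rule closed_walk_vec_in_span_short_cycles[OF assms(1) closed(1)])
  then have closed_vec:
      "walk_vec (butlast W @ [y, x]) \<in> fun_space.span (short_cycle_vecs G (L1 * L2 + 1) \<union> T)"
    using fun_space.span_mono[of "short_cycle_vecs G (L1 * L2 + 1)"] by blast
  have W_vec: "walk_vec W \<in> fun_space.span (short_cycle_vecs G (L1 * L2 + 1) \<union> T)"
    using W(3) fun_space.span_mono[of T] by blast
  have "oedge x y = walk_vec W - (walk_vec (butlast W @ [y, x]) :: _ \<Rightarrow> 'k)"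
    unfolding closed(2) by (simp add: oedge_swap[OF simple_graph_edge_neq[OF assms(1) edge]])
  then show ?thesis
    using fun_space.span_diff[OF W_vec closed_vec] by simp
qed

lemma card_edges_le_cyc_dim_add_card_edges:
  assumes "simple_graph G" "simple_graph H"
    and "\<And>x y. gdist G x y \<le> enat L1 * gdist H x y"
    and "\<And>x y. gdist H x y \<le> enat L2 * gdist G x y"
  shows "card (edges G) \<le> cyc_dim TYPE('k::field) G (L1 * L2 + 1) + card (edges H)"
proof -
  let ?C = "short_cycle_vecs G (L1 * L2 + 1) :: (_ \<Rightarrow> 'k) set"
  obtain T :: "(_ \<Rightarrow> 'k) set" where T: "finite T" "card T \<le> card (edges H)"
    and edge_walks: "\<And>x y. {x, y} \<in> edges H \<Longrightarrow>
      \<exists>P. walk_betw G x P y \<and> length P \<le> L1 + 1 \<and> walk_vec P \<in> fun_space.span T"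
    using edge_walk_vecs_exist[OF assms(1-3)] by blast
  have "edge_vec e \<in> fun_space.span (?C \<union> T)" if "e \<in> edges G" for e
  proof -
    have "{fst (orient e), snd (orient e)} \<in> edges G"
      using orient_edge[OF assms(1) that] that by simp
    from oedge_in_span_short_cycles_Un[OF assms(1) edge_walks assms(4) this] show ?thesis
      by (simp add: edge_vec_def)
  qed
  then have "card (edge_vec ` edges G :: (_ \<Rightarrow> 'k) set) \<le> fun_space.dim ?C + card T"
    by (intro fun_space.card_independent_le_dim_add_card finite_short_cycle_vecs[OF assms(1)]
        T(1) independent_edge_vecs[OF assms(1)]) auto
  moreover have "card (edge_vec ` edges G :: (_ \<Rightarrow> 'k) set) = card (edges G)"
    by (rule card_image[OF edge_vec_inj_on[OF assms(1)]])
  ultimately show ?thesis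
    using T(2) unfolding cyc_dim_def short_cycle_vecs_def by linarith
qed

section \<open>Integer vectors over the rationals and over an arbitrary field\<close>

definition int_oedge :: "'a \<Rightarrow> 'a \<Rightarrow> 'a \<times> 'a \<Rightarrow> int" where
  "int_oedge x y = (\<lambda>(u, v). if (u, v) = (x, y) then 1 else if (u, v) = (y, x) then -1 else 0)"

definition int_cyc_vec :: "'a list \<Rightarrow> 'a \<times> 'a \<Rightarrow> int" where
  "int_cyc_vec xs z = (\<Sum>i < length xs. int_oedge (xs ! i) (xs ! ((i + 1) mod length xs)) z)"

lemma oedge_eq_of_int: "oedge x y z = of_int (int_oedge x y z)"
  by (cases z) (simp add: oedge_def int_oedge_def)

lemma cyc_vec_eq_of_int: "cyc_vec xs = (\<lambda>z. of_int (int_cyc_vec xs z))"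
  by (simp add: cyc_vec_def int_cyc_vec_def oedge_eq_of_int)

lemma short_cycle_vecs_eq_of_int:
  "short_cycle_vecs G q =
     (\<lambda>v z. of_int (v z)) ` int_cyc_vec ` {xs. is_cycle G xs \<and> length xs \<le> q}"
  unfolding short_cycle_vecs_def cyc_vec_eq_of_int image_image by blast

lemma common_denominator:
  fixes u :: "'v \<Rightarrow> rat"
  assumes "finite A"
  obtains D :: int where "D > 0" "\<And>x. x \<in> A \<Longrightarrow> of_int D * u x \<in> \<int>"
proof -
  define den where "den x = snd (quotient_of (u x))" for x
  have "(\<Prod>x\<in>A. den x) > 0"
    by (simp add: prod_pos den_def quotient_of_denom_pos')
  moreover have "of_int (\<Prod>y\<in>A. den y) * u x \<in> \<int>" if "x \<in> A" for x
  proof -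
    obtain a d where q: "quotient_of (u x) = (a, d)"
      by fastforce
    then have "u x = of_int a / of_int d" "d > 0"
      by (simp_all add: quotient_of_div quotient_of_denom_pos)
    then have "of_int (den x) * u x = of_int a"
      using q by (simp add: den_def)
    moreover have "(\<Prod>y\<in>A. den y) = den x * (\<Prod>y\<in>A - {x}. den y)"
      by (rule prod.remove[OF assms that])
    ultimately have "of_int (\<Prod>y\<in>A. den y) * u x = of_int ((\<Prod>y\<in>A - {x}. den y) * a)"
      by (metis mult.assoc mult.commute of_int_mult)
    then show ?thesis
      by (metis Ints_of_int)
  qed
  ultimately show ?thesis
    using that by blast
qed

lemma int_relation_of_rat_relation:
  fixes t :: "('z \<Rightarrow> int) set" and u :: "('z \<Rightarrow> int) \<Rightarrow> rat"
  assumes "finite t" "\<And>z. (\<Sum>w\<in>t. u w * of_int (w z)) = 0" "w0 \<in> t" "u w0 \<noteq> 0"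
  obtains c :: "('z \<Rightarrow> int) \<Rightarrow> int" where "\<And>z. (\<Sum>w\<in>t. c w * w z) = 0" "c w0 \<noteq> 0"
proof -
  obtain D :: int where D: "D > 0" "\<And>w. w \<in> t \<Longrightarrow> of_int D * u w \<in> \<int>"
    using common_denominator[OF assms(1)] by blast
  define c where "c w = \<lfloor>of_int D * u w\<rfloor>" for w
  have c: "of_int (c w) = of_int D * u w" if "w \<in> t" for w
    using D(2)[OF that] by (simp add: c_def of_int_floor)
  have "(\<Sum>w\<in>t. c w * w z) = 0" for z
  proof -
    have "(of_int (\<Sum>w\<in>t. c w * w z) :: rat) = (\<Sum>w\<in>t. of_int D * (u w * of_int (w z)))"
      unfolding of_int_sum of_int_mult by (rule sum.cong) (simp_all add: c)
    also have "\<dots> = 0"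
      by (simp add: assms(2) flip: sum_distrib_left)
    finally show ?thesis
      by (simp only: of_int_eq_0_iff)
  qed
  moreover have "c w0 \<noteq> 0"
    using c[OF assms(3)] assms(4) D(1) by auto
  ultimately show ?thesis
    using that by blast
qed

text \<open>Divide by the gcd g of the coefficients: if all quotients vanished in K, then
  g * CHAR(K) would divide g.\<close>

lemma int_relation_with_coeff_nonzero_in_field:
  fixes t :: "('z \<Rightarrow> int) set" and c :: "('z \<Rightarrow> int) \<Rightarrow> int"
  assumes "\<And>z. (\<Sum>w\<in>t. c w * w z) = 0" "w0 \<in> t" "c w0 \<noteq> 0"
  obtains c' :: "('z \<Rightarrow> int) \<Rightarrow> int" and w1
  where "\<And>z. (\<Sum>w\<in>t. c' w * w z) = 0" "w1 \<in> t" "of_int (c' w1) \<noteq> (0 :: 'k::field)"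
proof -
  define g where "g = Gcd (c ` t)"
  have "g \<noteq> 0"
    using assms(2,3) by (auto simp: g_def)
  have g_dvd: "g dvd c w" if "w \<in> t" for w
    using that by (simp add: g_def Gcd_dvd)
  define c' where "c' w = c w div g" for w
  have "(\<Sum>w\<in>t. c' w * w z) = 0" for z
  proof -
    have "g * (\<Sum>w\<in>t. c' w * w z) = (\<Sum>w\<in>t. c w * w z)"
      unfolding sum_distrib_left
      by (rule sum.cong) (simp_all add: c'_def g_dvd mult.assoc [symmetric])
    then show ?thesis
      using assms(1) \<open>g \<noteq> 0\<close> by simp
  qed
  moreover have "\<exists>w1\<in>t. of_int (c' w1) \<noteq> (0 :: 'k)"
  proof (rule ccontr)
    assume no_witness: "\<not> (\<exists>w1\<in>t. of_int (c' w1) \<noteq> (0 :: 'k))"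
    then have "g * int CHAR('k) dvd c w" if "w \<in> t" for w
    proof -
      have "int CHAR('k) dvd c' w"
        using no_witness that by (auto simp: of_int_eq_0_iff_char_dvd)
      then have "g * int CHAR('k) dvd g * c' w"
        by (rule mult_dvd_mono[OF dvd_refl])
      then show ?thesis
        using g_dvd[OF that] by (simp add: c'_def)
    qed
    then have "g * int CHAR('k) dvd Gcd (c ` t)"
      by (intro Gcd_greatest) auto
    then have "g * int CHAR('k) dvd g * 1"
      by (simp only: g_def [symmetric] mult_1_right)
    then have "int CHAR('k) dvd 1"
      using dvd_times_left_cancel_iff[OF \<open>g \<noteq> 0\<close>] by blast
    then show False
      by simp
  qed
  ultimately show ?thesis
    using that by blast
qed

lemma dependent_if_int_relation:
  fixes t :: "('z \<Rightarrow> int) set"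
  assumes "finite t" and inj: "inj_on (\<lambda>v z. of_int (v z) :: 'k::field) t"
    and rel: "\<And>z. (\<Sum>w\<in>t. c w * w z) = 0" and "w1 \<in> t" "of_int (c w1) \<noteq> (0 :: 'k)"
  shows "fun_space.dependent ((\<lambda>v z. of_int (v z)) ` t :: ('z \<Rightarrow> 'k) set)"
proof -
  let ?K = "\<lambda>v z. of_int (v z) :: 'k"
  define u where "u v = (of_int (c (inv_into t ?K v)) :: 'k)" for v
  have "(\<Sum>v\<in>?K ` t. (\<lambda>z. u v * v z)) = 0"
  proof
    fix z
    have "(\<Sum>v\<in>?K ` t. (\<lambda>z. u v * v z)) z = of_int (\<Sum>w\<in>t. c w * w z)"
      by (simp add: sum_fun_apply sum.reindex[OF inj] u_def inv_into_f_f[OF inj])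
    then show "(\<Sum>v\<in>?K ` t. (\<lambda>z. u v * v z)) z = 0 z"
      by (simp add: rel)
  qed
  moreover have "u (?K w1) \<noteq> 0"
    using assms(5) by (simp add: u_def inv_into_f_f[OF inj assms(4)])
  ultimately show ?thesis
    unfolding fun_space.dependent_explicit using assms(1,4) by blast
qed

lemma independent_rat_if_independent:
  fixes B :: "('z \<Rightarrow> int) set"
  assumes indep: "fun_space.independent ((\<lambda>v z. of_int (v z)) ` B :: ('z \<Rightarrow> 'k::field) set)"
    and inj: "inj_on (\<lambda>v z. of_int (v z) :: 'k) B"
  shows "fun_space.independent ((\<lambda>v z. of_int (v z)) ` B :: ('z \<Rightarrow> rat) set)"
proof
  let ?Q = "\<lambda>v z. of_int (v z) :: rat" and ?K = "\<lambda>v z. of_int (v z) :: 'k"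
  assume "fun_space.dependent (?Q ` B)"
  then obtain s u v0 where s: "finite s" "s \<subseteq> ?Q ` B" and sum: "(\<Sum>v\<in>s. (\<lambda>z. u v * v z)) = 0"
    and v0: "v0 \<in> s" "u v0 \<noteq> 0"
    unfolding fun_space.dependent_explicit by blast
  obtain t where t: "t \<subseteq> B" "s = ?Q ` t"
    using s(2) by (auto simp: subset_image_iff)
  have inj_Q: "inj_on ?Q t"
    by (rule inj_onI) (simp add: fun_eq_iff)
  have "finite t"
    using s(1) t(2) finite_image_iff[OF inj_Q] by simp
  obtain w0 where w0: "w0 \<in> t" "v0 = ?Q w0"
    using v0(1) t(2) by blast
  have rel: "(\<Sum>w\<in>t. u (?Q w) * of_int (w z)) = 0" for z
    using fun_cong[OF sum, of z] by (simp add: t(2) sum_fun_apply sum.reindex[OF inj_Q])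
  have "u (?Q w0) \<noteq> 0"
    using v0(2) w0(2) by simp
  then obtain c where "\<And>z. (\<Sum>w\<in>t. c w * w z) = 0" "c w0 \<noteq> 0"
    using int_relation_of_rat_relation[OF \<open>finite t\<close> rel w0(1)] by blast
  then obtain c' w1 where "\<And>z. (\<Sum>w\<in>t. c' w * w z) = 0" "w1 \<in> t" "of_int (c' w1) \<noteq> (0 :: 'k)"
    using int_relation_with_coeff_nonzero_in_field[OF _ w0(1)] by blast
  then have "fun_space.dependent (?K ` t)"
    using \<open>finite t\<close> inj_on_subset[OF inj t(1)] by (intro dependent_if_int_relation)
  then show False
    using indep fun_space.dependent_mono[of "?K ` t" "?K ` B"] t(1) by blast
qed

lemma dim_of_int_le_dim_rat:
  fixes S :: "('z \<Rightarrow> int) set"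
  assumes "finite S"
  shows "fun_space.dim ((\<lambda>v z. of_int (v z)) ` S :: ('z \<Rightarrow> 'k::field) set)
    \<le> fun_space.dim ((\<lambda>v z. of_int (v z)) ` S :: ('z \<Rightarrow> rat) set)"
proof -
  let ?Q = "\<lambda>v z. of_int (v z) :: rat" and ?K = "\<lambda>v z. of_int (v z) :: 'k"
  obtain BK where BK: "BK \<subseteq> ?K ` S" "fun_space.independent BK" "?K ` S \<subseteq> fun_space.span BK"
    "card BK = fun_space.dim (?K ` S)"
    by (rule fun_space.basis_exists)
  obtain B where B: "B \<subseteq> S" "inj_on ?K B" "BK = ?K ` B"
    using BK(1) unfolding subset_image_inj by blast
  have inj_Q: "inj_on ?Q B"
    by (rule inj_onI) (simp add: fun_eq_iff)
  have "fun_space.independent (?Q ` B)"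
    using BK(2) B(2,3) by (intro independent_rat_if_independent) simp_all
  moreover have "?Q ` B \<subseteq> ?Q ` S"
    using B(1) by (rule image_mono)
  then have "?Q ` B \<subseteq> fun_space.span (?Q ` S)"
    using fun_space.span_superset[of "?Q ` S"] by (rule subset_trans)
  ultimately have "card (?Q ` B) \<le> fun_space.dim (?Q ` S)"
    by (rule fun_space.card_independent_le_dim[OF finite_imageI[OF assms]])
  moreover have "card (?Q ` B) = fun_space.dim (?K ` S)"
    using BK(4) B(3) card_image[OF B(2)] card_image[OF inj_Q] by simp
  ultimately show ?thesis
    by simp
qed

lemma cyc_dim_le_cyc_dim_rat:
  assumes "simple_graph G"
  shows "cyc_dim TYPE('k::field) G q \<le> cyc_dim TYPE(rat) G q"
  unfolding cyc_dim_def short_cycle_vecs_def [symmetric] short_cycle_vecs_eq_of_int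
  by (intro dim_of_int_le_dim_rat finite_imageI finite_short_cycles assms)

section \<open>Graph sequences\<close>

lemma Liminf_ratio_minus_one_mono:
  fixes a b :: "nat \<Rightarrow> real" and N :: "nat \<Rightarrow> nat"
  assumes "\<And>n. a n \<le> b n"
  shows "Liminf sequentially (\<lambda>n. ereal (a n / real (N n))) - 1
    \<le> Liminf sequentially (\<lambda>n. ereal (b n / real (N n))) - 1"
  by (intro ereal_minus_mono Liminf_mono always_eventually allI order_refl)
    (simp add: assms divide_right_mono)

lemma s_const_rat_le:
  assumes "\<And>n. simple_graph (G n)"
  shows "s_const TYPE(rat) q G \<le> s_const TYPE('k::field) q G"
  unfolding s_const_def
  by (rule Liminf_ratio_minus_one_mono) (simp add: cyc_dim_le_cyc_dim_rat assms)

lemma beta_rat_le_beta: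
  assumes "\<And>n. simple_graph (G n)"
  shows "beta TYPE(rat) G \<le> beta TYPE('k::field) G"
  unfolding beta_def
proof (rule INF_mono)
  fix q :: nat
  have "s_const TYPE(rat) q G \<le> s_const TYPE('k) q G"
    by (rule s_const_rat_le) (rule assms)
  then show "\<exists>q'\<in>UNIV. s_const TYPE(rat) q' G \<le> s_const TYPE('k) q G"
    by blast
qed

lemma s_const_le_e_const_minus_one:
  assumes "\<And>n. simple_graph (G n)" "\<And>n. simple_graph (H n)"
    and "\<And>n. verts (H n) = verts (G n)"
    and "\<And>n x y. gdist (G n) x y \<le> enat L1 * gdist (H n) x y"
    and "\<And>n x y. gdist (H n) x y \<le> enat L2 * gdist (G n) x y"
  shows "s_const TYPE('k::field) (L1 * L2 + 1) G \<le> e_const H - 1"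
  unfolding s_const_def e_const_def assms(3)
proof (rule Liminf_ratio_minus_one_mono)
  fix n
  have "card (edges (G n)) \<le> cyc_dim TYPE('k) (G n) (L1 * L2 + 1) + card (edges (H n))"
    by (rule card_edges_le_cyc_dim_add_card_edges[OF assms(1,2,4,5)])
  then have "real (card (edges (G n)))
      \<le> real (cyc_dim TYPE('k) (G n) (L1 * L2 + 1)) + real (card (edges (H n)))"
    by (metis of_nat_add of_nat_le_iff)
  then show "real (card (edges (G n))) - real (cyc_dim TYPE('k) (G n) (L1 * L2 + 1))
      \<le> real (card (edges (H n)))"
    by linarith
qed

lemma beta_le_c_const_minus_one:
  assumes "graph_seq G"
  shows "beta TYPE('k::field) G \<le> c_const G - 1"
proof -
  have le_minus_one: "x \<le> z - 1 \<longleftrightarrow> x + 1 \<le> z" for x z :: ereal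
    by (rule ereal_le_minus) simp
  have bound: "beta TYPE('k) G + 1 \<le> e_const H" if H: "graph_seq H" "qi_equiv G H" for H
  proof -
    have "\<And>n. simple_graph (G n)" "\<And>n. simple_graph (H n)"
      using assms H(1) unfolding graph_seq_def by blast+
    moreover have "\<And>n. verts (H n) = verts (G n)"
      using H(2) unfolding qi_equiv_def prec_def by blast
    moreover obtain L1 L2 where "\<And>n x y. gdist (G n) x y \<le> enat L1 * gdist (H n) x y"
      "\<And>n x y. gdist (H n) x y \<le> enat L2 * gdist (G n) x y"
      using H(2) unfolding qi_equiv_def prec_def by blast
    ultimately have "s_const TYPE('k) (L1 * L2 + 1) G \<le> e_const H - 1"
      by (rule s_const_le_e_const_minus_one)
    moreover have "beta TYPE('k) G \<le> s_const TYPE('k) (L1 * L2 + 1) G"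
      unfolding beta_def by (rule INF_lower) simp
    ultimately show ?thesis
      unfolding le_minus_one [symmetric] by (rule order_trans [rotated])
  qed
  have "beta TYPE('k) G + 1 \<le> c_const G"
    unfolding c_const_def by (rule INF_greatest) (use bound in blast)
  then show ?thesis
    unfolding le_minus_one .
qed

theorem proposition3:
  fixes G :: "nat \<Rightarrow> 'a graph" and p :: nat
  assumes "graph_seq G" and "prime p" and "CARD('k::{finite,field}) = p"
  shows "beta TYPE(rat) G \<le> beta TYPE('k) G \<and> beta TYPE('k) G \<le> c_const G - 1"
proof
  have "\<And>n. simple_graph (G n)"
    using assms(1) by (simp add: graph_seq_def)
  then show "beta TYPE(rat) G \<le> beta TYPE('k) G"
    by (rule beta_rat_le_beta)
  show "beta TYPE('k) G \<le> c_const G - 1"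
    using assms(1) by (rule beta_le_c_const_minus_one)
qed

end
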